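(* Let $\beta\ge 1$ and let $R=(S^0,\dots,S^T)$ be a $\beta$-bounded $T$-covering in a congestion game in which every delay function is $f(x)=x$. Then $C(S^T)\le 2\rho(R)$.
   Context: A congestion game has players $N=\{1,\dots,n\}$, a finite resource set $E$ and strategy sets $\Sigma_i\subseteq 2^E$. For a profile $S=(s_1,\dots,s_n)$, $n_e(S)=|\{i: e\in s_i\}|$. Here all delays are $f(x)=x$, so the cost of player $i$ is $c_i(S)=\sum_{e\in s_i}n_e(S)$ and the social cost is $C(S)=\sum_i c_i(S)=\sum_{e\in E}n_e(S)^2$. Fix an optimal profile $S^*=(s_1^*,\dots,s_n^* )$ minimizing $C$ and write $\mathrm{OPT}=C(S^* )$. A best response of player $i$ in $S$ is a strategy $s_i^b\in\Sigma_i$ minimizing $c_i(S_{-i},\cdot)$ over $\Sigma_i$ (where $(S_{-i},s_i')$ replaces $s_i$ by $s_i'$); if no strategy strictly decreases $i$'s cost, the best response is $s_i$ itself. A $T$-covering is a sequence of profiles $R=(S^0,\dots,S^T)$ together with players $\pi(1),\dots,\pi(T)$ such that for each $1\le t\le T$, $S^t=(S^{t-1}_{-\pi(t)},s')$ where $s'$ is a best response of $\pi(t)$ in $S^{t-1}$, and every player of $N$ occurs at least once among $\pi(1),\dots,\pi(T)$. It is $\beta$-bounded if every player occurs at most $\beta$ times among $\pi(1),\dots,\pi(T)$. For each player $i$, $\mathrm{last}(i)=\max\{t:\pi(t)=i\}$. Define $\rho(R)=\sum_{i=1}^n\sum_{e\in s_i^*}\bigl(n_e(S^{\mathrm{last}(i)-1})+1\bigr)$.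 *)

theory Defs
  imports Main
begin

text \<open>Players are 0,...,n-1 (the paper's 1,...,n shifted). A profile is a function
  from players to strategies (sets of resources); entries for indices \<ge> n are ignored.\<close>

type_synonym 'e profile = "nat \<Rightarrow> 'e set"

definition load :: "nat \<Rightarrow> 'e profile \<Rightarrow> 'e \<Rightarrow> nat" where
  "load n S e = card {i \<in> {..<n}. e \<in> S i}"

definition pcost :: "nat \<Rightarrow> 'e profile \<Rightarrow> nat \<Rightarrow> nat" where
  "pcost n S i = (\<Sum>e\<in>S i. load n S e)"

definition social_cost :: "nat \<Rightarrow> 'e set \<Rightarrow> 'e profile \<Rightarrow> nat" where
  "social_cost n E S = (\<Sum>e\<in>E. (load n S e)^2)"

definition valid_profile :: "nat \<Rightarrow> (nat \<Rightarrow> 'e set set) \<Rightarrow> 'e profile \<Rightarrow> bool" where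
  "valid_profile n \<Sigma> S \<longleftrightarrow> (\<forall>i<n. S i \<in> \<Sigma> i)"

definition congestion_game :: "nat \<Rightarrow> 'e set \<Rightarrow> (nat \<Rightarrow> 'e set set) \<Rightarrow> bool" where
  "congestion_game n E \<Sigma> \<longleftrightarrow> finite E \<and> (\<forall>i<n. \<Sigma> i \<subseteq> Pow E)"

definition is_optimal :: "nat \<Rightarrow> 'e set \<Rightarrow> (nat \<Rightarrow> 'e set set) \<Rightarrow> 'e profile \<Rightarrow> bool" where
  "is_optimal n E \<Sigma> S \<longleftrightarrow> valid_profile n \<Sigma> S \<and>
     (\<forall>S'. valid_profile n \<Sigma> S' \<longrightarrow> social_cost n E S \<le> social_cost n E S')"

definition best_response :: "nat \<Rightarrow> (nat \<Rightarrow> 'e set set) \<Rightarrow> 'e profile \<Rightarrow> nat \<Rightarrow> 'e set \<Rightarrow> bool" where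
  "best_response n \<Sigma> S i s' \<longleftrightarrow> s' \<in> \<Sigma> i \<and>
     (\<forall>s\<in>\<Sigma> i. pcost n (S(i := s')) i \<le> pcost n (S(i := s)) i) \<and>
     ((\<forall>s\<in>\<Sigma> i. pcost n S i \<le> pcost n (S(i := s)) i) \<longrightarrow> s' = S i)"

definition is_covering :: "nat \<Rightarrow> (nat \<Rightarrow> 'e set set) \<Rightarrow> nat \<Rightarrow> (nat \<Rightarrow> 'e profile) \<Rightarrow> (nat \<Rightarrow> nat) \<Rightarrow> bool" where
  "is_covering n \<Sigma> T Sq \<pi> \<longleftrightarrow> valid_profile n \<Sigma> (Sq 0) \<and>
     (\<forall>t\<in>{1..T}. \<pi> t < n \<and>
        (\<exists>s'. best_response n \<Sigma> (Sq (t - 1)) (\<pi> t) s' \<and> Sq t = (Sq (t - 1))(\<pi> t := s'))) \<and>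
     (\<forall>i<n. \<exists>t\<in>{1..T}. \<pi> t = i)"

definition is_bounded :: "nat \<Rightarrow> nat \<Rightarrow> nat \<Rightarrow> (nat \<Rightarrow> nat) \<Rightarrow> bool" where
  "is_bounded \<beta> n T \<pi> \<longleftrightarrow> (\<forall>i<n. card {t\<in>{1..T}. \<pi> t = i} \<le> \<beta>)"

definition last_move :: "nat \<Rightarrow> (nat \<Rightarrow> nat) \<Rightarrow> nat \<Rightarrow> nat" where
  "last_move T \<pi> i = Max {t\<in>{1..T}. \<pi> t = i}"

definition rho :: "nat \<Rightarrow> 'e profile \<Rightarrow> nat \<Rightarrow> (nat \<Rightarrow> 'e profile) \<Rightarrow> (nat \<Rightarrow> nat) \<Rightarrow> nat" where
  "rho n Sstar T Sq \<pi> = (\<Sum>i<n. \<Sum>e\<in>Sstar i. load n (Sq (last_move T \<pi> i - 1)) e + 1)"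

end

theory Submission
  imports Defs
begin

text \<open>
  Let F = Sq T be the final profile and l i the last move of player i.
  For each resource e with user set P e in F, a counting argument over the order
  given by l yields  |P e|^2 \<le> 2 \<Sum>i\<in>P e. #{j \<in> P e. l j \<le> l i}.
  Summing over e and swapping the sums, the right side becomes twice
  \<Sum>i \<Sum>e\<in>F i. #{j \<in> P e. l j \<le> l i}.  A player j with l j \<le> l i already plays
  its final strategy at time l i (it never moves again), so the inner count is at
  most the load of e in Sq (l i); hence the inner sum is at most i's cost in
  Sq (l i).  Since i's move at time l i is a best response, this cost is at most
  what i would pay by switching to its optimal strategy, which is bounded by the
  i-th summand of rho.
\<close>

text \<open>Counting lemma: ordering a finite set by a key l, every pair (i,j) is counted
  at least once in the pairs with l j \<le> l i or l i \<le> l j, so |P|^2 is at most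
  twice the number of pairs with l j \<le> l i.\<close>
lemma card_sq_le_twice_dominated_pairs:
  fixes l :: "'a \<Rightarrow> 'b::linorder"
  assumes "finite P"
  shows "(card P)^2 \<le> 2 * (\<Sum>i\<in>P. card {j\<in>P. l j \<le> l i})"
proof -
  let ?le = "\<lambda>i j. if l j \<le> l i then 1 else (0::nat)"
  have count: "card {j\<in>P. l j \<le> l i} = (\<Sum>j\<in>P. ?le i j)" for i
    using card_eq_sum sum.inter_filter[OF assms, of "\<lambda>_. 1::nat"] by metis
  have "(card P)^2 = (\<Sum>i\<in>P. \<Sum>j\<in>P. (1::nat))"
    by (simp add: power2_eq_square)
  also have "\<dots> \<le> (\<Sum>i\<in>P. \<Sum>j\<in>P. ?le i j + ?le j i)"
    by (intro sum_mono) auto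
  also have "\<dots> = (\<Sum>i\<in>P. \<Sum>j\<in>P. ?le i j) + (\<Sum>j\<in>P. \<Sum>i\<in>P. ?le j i)"
    by (simp add: sum.distrib sum.swap[of "\<lambda>i j. ?le j i"])
  also have "\<dots> = 2 * (\<Sum>i\<in>P. card {j\<in>P. l j \<le> l i})"
    by (simp add: count)
  finally show ?thesis .
qed

lemma sum_resources_users_swap:
  assumes "finite E" and "finite I" and "\<And>i. i \<in> I \<Longrightarrow> A i \<subseteq> E"
  shows "(\<Sum>e\<in>E. \<Sum>i\<in>{i\<in>I. e \<in> A i}. g e i) = (\<Sum>i\<in>I. \<Sum>e\<in>A i. g e i)"
proof -
  have "(\<Sum>e\<in>E. \<Sum>i\<in>{i\<in>I. e \<in> A i}. g e i) = (\<Sum>i\<in>I. \<Sum>e\<in>{e\<in>E. e \<in> A i}. g e i)"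
    using assms(1,2) by (rule sum.swap_restrict)
  also have "\<dots> = (\<Sum>i\<in>I. \<Sum>e\<in>A i. g e i)"
    using assms(3) by (intro sum.cong refl) auto
  finally show ?thesis .
qed

lemma load_update_le:
  assumes "i < n"
  shows "load n (S(i := s)) e \<le> load n S e + 1"
proof -
  have "{j \<in> {..<n}. e \<in> (S(i := s)) j} \<subseteq> insert i {j \<in> {..<n}. e \<in> S j}"
    by auto
  then have "load n (S(i := s)) e \<le> card (insert i {j \<in> {..<n}. e \<in> S j})"
    unfolding load_def by (intro card_mono) auto
  also have "\<dots> \<le> load n S e + 1"
    unfolding load_def by (simp add: card_insert_if)
  finally show ?thesis .
qed

text \<open>The cost of a best response is at most the cost of deviating to any
  strategy s, which in turn is bounded by the current loads on s plus one.\<close>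
lemma best_response_cost_le:
  assumes "i < n" and "best_response n \<Sigma> S i s'" and "s \<in> \<Sigma> i"
  shows "pcost n (S(i := s')) i \<le> (\<Sum>e\<in>s. load n S e + 1)"
proof -
  have "pcost n (S(i := s')) i \<le> pcost n (S(i := s)) i"
    using assms(2,3) unfolding best_response_def by blast
  also have "\<dots> \<le> (\<Sum>e\<in>s. load n S e + 1)"
    unfolding pcost_def fun_upd_same by (intro sum_mono load_update_le[OF assms(1)])
  finally show ?thesis .
qed

lemma covering_step:
  assumes "is_covering n \<Sigma> T Sq \<pi>" and "t \<in> {1..T}"
  obtains s' where "\<pi> t < n" and "best_response n \<Sigma> (Sq (t - 1)) (\<pi> t) s'"
    and "Sq t = (Sq (t - 1))(\<pi> t := s')"
  using assms unfolding is_covering_def by blast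

lemma last_move_props:
  assumes "is_covering n \<Sigma> T Sq \<pi>" and "i < n"
  shows "last_move T \<pi> i \<in> {1..T}" and "\<pi> (last_move T \<pi> i) = i"
    and "\<And>t. t \<in> {1..T} \<Longrightarrow> \<pi> t = i \<Longrightarrow> t \<le> last_move T \<pi> i"
proof -
  have fin: "finite {t\<in>{1..T}. \<pi> t = i}" by simp
  have ne: "{t\<in>{1..T}. \<pi> t = i} \<noteq> {}"
    using assms unfolding is_covering_def by blast
  show "last_move T \<pi> i \<in> {1..T}" and "\<pi> (last_move T \<pi> i) = i"
    using Max_in[OF fin ne] unfolding last_move_def by auto
  show "\<And>t. t \<in> {1..T} \<Longrightarrow> \<pi> t = i \<Longrightarrow> t \<le> last_move T \<pi> i"
    using Max_ge[OF fin] unfolding last_move_def by auto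
qed

lemma strategy_frozen_after_last_move:
  assumes cov: "is_covering n \<Sigma> T Sq \<pi>" and "j < n"
    and "last_move T \<pi> j \<le> t" and "t \<le> T"
  shows "Sq t j = Sq (last_move T \<pi> j) j"
proof -
  let ?l = "last_move T \<pi> j"
  have "Sq (?l + d) j = Sq ?l j" if "?l + d \<le> T" for d
    using that
  proof (induction d)
    case 0
    then show ?case by simp
  next
    case (Suc d)
    have t: "Suc (?l + d) \<in> {1..T}" using Suc.prems by auto
    obtain s' where "Sq (Suc (?l + d)) = (Sq (?l + d))(\<pi> (Suc (?l + d)) := s')"
      using covering_step[OF cov t] by auto
    moreover have "\<pi> (Suc (?l + d)) \<noteq> j"
      using last_move_props(3)[OF cov \<open>j < n\<close> t] by fastforce
    ultimately show ?case using Suc by simp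
  qed
  from this[of "t - ?l"] assms(3,4) show ?thesis by simp
qed

lemma final_strategy_is_last_best_response:
  assumes cov: "is_covering n \<Sigma> T Sq \<pi>" and i: "i < n"
  defines "l \<equiv> last_move T \<pi> i"
  shows "best_response n \<Sigma> (Sq (l - 1)) i (Sq T i)"
    and "Sq l = (Sq (l - 1))(i := Sq T i)"
proof -
  obtain s' where br: "best_response n \<Sigma> (Sq (l - 1)) i s'"
    and upd: "Sq l = (Sq (l - 1))(i := s')"
    using covering_step[OF cov last_move_props(1)[OF cov i]] last_move_props(2)[OF cov i]
    unfolding l_def by metis
  have "Sq T i = s'"
    using strategy_frozen_after_last_move[OF cov i, of T] last_move_props(1)[OF cov i] upd
    unfolding l_def by simp
  with br upd show "best_response n \<Sigma> (Sq (l - 1)) i (Sq T i)"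
    and "Sq l = (Sq (l - 1))(i := Sq T i)" by simp_all
qed

text \<open>Per-player bound: counting, for each resource of i's final strategy, the
  final users that finished moving no later than i gives at most the i-th summand
  of rho, since they all already sit on that resource at i's last move.\<close>
lemma earlier_users_le_rho_term:
  assumes cov: "is_covering n \<Sigma> T Sq \<pi>" and i: "i < n" and opt: "Sstar i \<in> \<Sigma> i"
  defines "l \<equiv> last_move T \<pi>"
  shows "(\<Sum>e\<in>Sq T i. card {j\<in>{j\<in>{..<n}. e \<in> Sq T j}. l j \<le> l i})
         \<le> (\<Sum>e\<in>Sstar i. load n (Sq (l i - 1)) e + 1)"
proof -
  have users: "card {j\<in>{j\<in>{..<n}. e \<in> Sq T j}. l j \<le> l i} \<le> load n (Sq (l i)) e" for e
  proof -
    have "Sq T j = Sq (l i) j" if "j < n" "l j \<le> l i" for j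
      using strategy_frozen_after_last_move[OF cov that(1), of T]
        strategy_frozen_after_last_move[OF cov that(1), of "l i"]
        last_move_props(1)[OF cov i] that(2) unfolding l_def by auto
    then show ?thesis
      unfolding load_def by (intro card_mono) auto
  qed
  have "(\<Sum>e\<in>Sq T i. card {j\<in>{j\<in>{..<n}. e \<in> Sq T j}. l j \<le> l i})
        \<le> pcost n (Sq (l i)) i"
  proof -
    have "Sq (l i) i = Sq T i"
      using final_strategy_is_last_best_response(2)[OF cov i] unfolding l_def by simp
    then have "pcost n (Sq (l i)) i = (\<Sum>e\<in>Sq T i. load n (Sq (l i)) e)"
      unfolding pcost_def by simp
    then show ?thesis using sum_mono[OF users] by simp
  qed
  also have "\<dots> \<le> (\<Sum>e\<in>Sstar i. load n (Sq (l i - 1)) e + 1)"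
    using best_response_cost_le[OF i final_strategy_is_last_best_response(1)[OF cov i] opt]
      final_strategy_is_last_best_response(2)[OF cov i] unfolding l_def by simp
  finally show ?thesis .
qed

theorem lemma1:
  fixes n T \<beta> :: nat and E :: "'e set" and \<Sigma> :: "nat \<Rightarrow> 'e set set"
    and Sstar :: "'e profile" and Sq :: "nat \<Rightarrow> 'e profile" and \<pi> :: "nat \<Rightarrow> nat"
  assumes "congestion_game n E \<Sigma>"
    and "is_optimal n E \<Sigma> Sstar"
    and "\<beta> \<ge> 1"
    and "is_covering n \<Sigma> T Sq \<pi>"
    and "is_bounded \<beta> n T \<pi>"
  shows "social_cost n E (Sq T) \<le> 2 * rho n Sstar T Sq \<pi>"
proof -
  define l where "l = last_move T \<pi>"
  define P where "P e = {j\<in>{..<n}. e \<in> Sq T j}" for e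
  define h where "h e i = card {j\<in>P e. l j \<le> l i}" for e i
  have finE: "finite E" using assms(1) unfolding congestion_game_def by simp
  have final_in_E: "Sq T i \<subseteq> E" if "i \<in> {..<n}" for i
    using final_strategy_is_last_best_response(1)[OF assms(4)] that assms(1)
    unfolding congestion_game_def best_response_def by blast
  have "social_cost n E (Sq T) = (\<Sum>e\<in>E. (card (P e))^2)"
    unfolding social_cost_def load_def P_def ..
  also have "\<dots> \<le> (\<Sum>e\<in>E. 2 * (\<Sum>i\<in>P e. h e i))"
    unfolding h_def P_def by (intro sum_mono card_sq_le_twice_dominated_pairs) simp
  also have "\<dots> = 2 * (\<Sum>i<n. \<Sum>e\<in>Sq T i. h e i)"
    using sum_resources_users_swap[OF finE finite_lessThan final_in_E, where g = h]
    unfolding P_def sum_distrib_left[symmetric] by simp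
  also have "\<dots> \<le> 2 * (\<Sum>i<n. \<Sum>e\<in>Sstar i. load n (Sq (l i - 1)) e + 1)"
    using earlier_users_le_rho_term[OF assms(4)] assms(2)
    unfolding h_def P_def l_def is_optimal_def valid_profile_def
    by (intro mult_left_mono sum_mono) auto
  also have "\<dots> = 2 * rho n Sstar T Sq \<pi>"
    unfolding rho_def l_def ..
  finally show ?thesis .
qed

end
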